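(* Let $\nu$ be a probability measure on $\mathbb{R}$ with $H(\nu)$ finite, and let $\mu$ be a probability measure on $\mathbb{R}$. Assume that $$\int\log(1+|x|)\,d\nu(x)<\infty\quad\text{and}\quad\int\log(1+|x|)\,d\mu(x)<\infty.$$ Then $$\liminf_{t\to0}\frac{H(\mu*D_{t}^{*}(\nu))}{|\log t|}=\liminf_{t\to0}\frac{H(\mu*D_{t}^{*}(\chi_{[0,1]}))}{|\log t|},$$ where $\chi_{[0,1]}$ denotes the measure $\chi_{[0,1]}(x)\,dx$. In particular, the left-hand side does not depend on $\nu$.
   Context: For $t>0$, $D_t:\mathbb{R}\to\mathbb{R}$ is the dilation $x\mapsto tx$, and $D_t^*(\rho)$ is the push-forward of a measure $\rho$ by $D_t$. For a non-negative measurable function $q$, $H(q(x)\,dx)=\int q(x)\log q(x)\,dx$; this is used even when $q(x)\,dx$ is not a probability measure. The statement $H(\nu)$ finite means that $\nu$ is Lebesgue absolutely continuous and its density $q$ has $\int q\log q\,dx$ finite. *)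

theory Defs
  imports "HOL-Probability.Probability"
begin

definition ent_dens :: "(real \<Rightarrow> real) \<Rightarrow> ereal" where
  "ent_dens q =
     enn2ereal (\<integral>\<^sup>+ x. ennreal (q x * ln (q x)) \<partial>lborel)
     - enn2ereal (\<integral>\<^sup>+ x. ennreal (- (q x * ln (q x))) \<partial>lborel)"

definition ent :: "real measure \<Rightarrow> ereal" where
  "ent \<nu> = ent_dens (\<lambda>x. enn2real (RN_deriv lborel \<nu> x))"

definition dil :: "real \<Rightarrow> real measure \<Rightarrow> real measure" where
  "dil t \<rho> = distr \<rho> borel (\<lambda>x. t * x)"

end

theory Submission
  imports Defs
begin

text \<open>Write \<open>H(f) = \<integral> f ln f\<close>. For a probability measure \<open>T\<close> and a density \<open>p\<close>, the gain
  \<open>H(p) - H(T \<star> p)\<close> is the \<open>T\<close>-average over \<open>z\<close> of the Kullback-Leibler divergence of the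
  translate \<open>p(\<cdot> - z)\<close> from \<open>T \<star> p\<close>. By joint convexity of the divergence this average can only
  decrease when both densities are first smoothed by another probability measure \<open>M\<close>, so
  \<open>0 \<le> H(M \<star> p) - H(M \<star> T \<star> p) \<le> H(p) - H(T \<star> p)\<close>.
  Take \<open>p = D\<^sub>t\<nu>\<close>, \<open>T = D\<^sub>t\<chi>\<close> and vice versa. Dilation commutes with convolution and shifts
  every \<open>H\<close> by \<open>- ln t\<close>, so both right-hand sides equal gains \<open>H(\<nu>) - H(\<nu> \<star> \<chi>)\<close> and
  \<open>H(\<chi>) - H(\<nu> \<star> \<chi>)\<close> that do not depend on \<open>t\<close>. Hence \<open>H(\<mu> \<star> D\<^sub>t\<nu>)\<close> and
  \<open>H(\<mu> \<star> D\<^sub>t\<chi>)\<close> differ by a bounded amount, which disappears after division by \<open>\<bar>ln t\<bar>\<close>.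
  The logarithmic moments keep all these entropies finite: they control the negative part of
  \<open>f ln f\<close>, while convolution does not increase its positive part.\<close>

section \<open>Densities, convolution and dilation\<close>

lemma ent_density:
  fixes f :: "real \<Rightarrow> ennreal"
  assumes [measurable]: "f \<in> borel_measurable borel"
  shows "ent (density lborel f) = ent_dens (\<lambda>x. enn2real (f x))"
proof -
  have "AE x in lborel. f x = RN_deriv lborel (density lborel f) x"
    by (rule sigma_finite_measure.RN_deriv_unique[OF sigma_finite_lborel]) auto
  then have "AE x in lborel. enn2real (RN_deriv lborel (density lborel f) x) = enn2real (f x)"
    by eventually_elim simp
  then show ?thesis
    unfolding ent_def ent_dens_def
    by (intro arg_cong2[where f="\<lambda>a b. enn2ereal a - enn2ereal b"] nn_integral_cong_AE)
       (auto elim!: eventually_mono)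
qed

lemma integrable_nn_integral_parts:
  fixes f :: "'a \<Rightarrow> real"
  assumes "integrable M f"
  obtains a b where "(\<integral>\<^sup>+x. ennreal (f x) \<partial>M) = ennreal a" "(\<integral>\<^sup>+x. ennreal (- f x) \<partial>M) = ennreal b"
    "0 \<le> a" "0 \<le> b" "(\<integral>x. f x \<partial>M) = a - b"
proof -
  have "(\<integral>\<^sup>+x. ennreal (s * f x) \<partial>M) < \<infinity>" if "\<bar>s\<bar> = 1" for s
  proof -
    have "(\<integral>\<^sup>+x. ennreal (s * f x) \<partial>M) \<le> (\<integral>\<^sup>+x. ennreal (norm (f x)) \<partial>M)"
      using that by (intro nn_integral_mono ennreal_leI) (metis abs_ge_self abs_mult mult_1 real_norm_def)
    then show ?thesis
      using assms unfolding integrable_iff_bounded by (blast intro: le_less_trans)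
  qed
  from this[of 1] this[of "-1"] obtain a b where
    "(\<integral>\<^sup>+x. ennreal (f x) \<partial>M) = ennreal a" "0 \<le> a"
    "(\<integral>\<^sup>+x. ennreal (- f x) \<partial>M) = ennreal b" "0 \<le> b"
    by (auto simp: less_top_ennreal)
  with that show ?thesis
    using real_lebesgue_integral_def[OF assms] by simp
qed

lemma ent_dens_eq_integral:
  assumes "integrable lborel (\<lambda>x. p x * ln (p x))"
  shows "ent_dens p = ereal (\<integral>x. p x * ln (p x) \<partial>lborel)"
proof -
  obtain a b where "(\<integral>\<^sup>+x. ennreal (p x * ln (p x)) \<partial>lborel) = ennreal a"
    "(\<integral>\<^sup>+x. ennreal (- (p x * ln (p x))) \<partial>lborel) = ennreal b"
    "0 \<le> a" "0 \<le> b" "(\<integral>x. p x * ln (p x) \<partial>lborel) = a - b"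
    by (rule integrable_nn_integral_parts[OF assms])
  then show ?thesis
    unfolding ent_dens_def by simp
qed

lemma ent_density_eq_integral:
  assumes [measurable]: "p \<in> borel_measurable borel" and "\<And>x. 0 \<le> p x"
    and "integrable lborel (\<lambda>x. p x * ln (p x))"
  shows "ent (density lborel (\<lambda>x. ennreal (p x))) = ereal (\<integral>x. p x * ln (p x) \<partial>lborel)"
  using assms by (simp add: ent_density ent_dens_eq_integral)

definition prob_density :: "(real \<Rightarrow> real) \<Rightarrow> bool" where
  "prob_density p \<longleftrightarrow>
     p \<in> borel_measurable borel \<and> (\<forall>x. 0 \<le> p x) \<and> (\<integral>\<^sup>+x. ennreal (p x) \<partial>lborel) = 1"

lemma prob_densityD:
  assumes "prob_density p"
  shows prob_density_measurable: "p \<in> borel_measurable borel"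
    and prob_density_nonneg: "0 \<le> p x"
    and nn_integral_prob_density: "(\<integral>\<^sup>+x. ennreal (p x) \<partial>lborel) = 1"
    and integrable_prob_density: "integrable lborel p"
    and integral_prob_density: "(\<integral>x. p x \<partial>lborel) = 1"
proof -
  show [measurable]: "p \<in> borel_measurable borel" and nonneg: "0 \<le> p x"
    and one: "(\<integral>\<^sup>+x. ennreal (p x) \<partial>lborel) = 1" for x
    using assms by (auto simp: prob_density_def)
  show "integrable lborel p"
    using nonneg one by (intro integrableI_nonneg) auto
  show "(\<integral>x. p x \<partial>lborel) = 1"
    using nonneg one by (subst integral_eq_nn_integral) auto
qed

lemma prob_space_prob_density: "prob_density p \<Longrightarrow> prob_space (density lborel (\<lambda>x. ennreal (p x)))"
  by (intro prob_spaceI) (auto simp: emeasure_density prob_density_def)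

lemma prob_density_AE_unique:
  assumes "prob_density p" "prob_density q"
    and "density lborel (\<lambda>x. ennreal (p x)) = density lborel (\<lambda>x. ennreal (q x))"
  shows "AE x in lborel. p x = q x"
proof -
  have "AE x in lborel. ennreal (p x) = ennreal (q x)"
    using assms by (intro sigma_finite_measure.density_unique[OF sigma_finite_lborel])
      (auto simp: prob_densityD)
  then show ?thesis
    by eventually_elim (use assms in \<open>auto simp: prob_densityD\<close>)
qed

text \<open>The integral is finite almost everywhere; \<open>enn2real\<close> maps the exceptional value \<open>\<infinity>\<close>
  to \<open>0\<close>.\<close>
definition conv_density :: "real measure \<Rightarrow> (real \<Rightarrow> real) \<Rightarrow> real \<Rightarrow> real" where
  "conv_density M p x = enn2real (\<integral>\<^sup>+y. ennreal (p (x - y)) \<partial>M)"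

lemma conv_density_nonneg: "0 \<le> conv_density M p x"
  by (simp add: conv_density_def)

lemma conv_density_measurable[measurable]:
  assumes "prob_space M" "sets M = sets borel" and [measurable]: "p \<in> borel_measurable borel"
  shows "conv_density M p \<in> borel_measurable borel"
proof -
  interpret prob_space M by fact
  have [measurable_cong]: "sets M = sets borel" by fact
  show ?thesis
    unfolding conv_density_def[abs_def] by measurable
qed

lemma nn_integral_lborel_swap:
  fixes h :: "real \<times> real \<Rightarrow> ennreal"
  assumes "prob_space M" and [measurable_cong]: "sets M = sets borel"
    and [measurable]: "h \<in> borel_measurable (lborel \<Otimes>\<^sub>M M)"
  shows "(\<integral>\<^sup>+x. \<integral>\<^sup>+y. h (x, y) \<partial>M \<partial>lborel) = (\<integral>\<^sup>+y. \<integral>\<^sup>+x. h (x, y) \<partial>lborel \<partial>M)"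
proof -
  interpret pair_sigma_finite lborel M
    by (intro pair_sigma_finite.intro sigma_finite_lborel prob_space_imp_sigma_finite assms)
  show ?thesis
    by (rule Fubini'[symmetric]) simp
qed

lemma nn_integral_lborel_translate:
  fixes f :: "real \<Rightarrow> ennreal"
  assumes "f \<in> borel_measurable borel"
  shows "(\<integral>\<^sup>+x. f (x - y) \<partial>lborel) = (\<integral>\<^sup>+x. f x \<partial>lborel)"
  using nn_integral_real_affine[OF assms, of 1 "-y"] by simp

lemma nn_integral_conv:
  fixes f :: "real \<Rightarrow> ennreal"
  assumes "prob_space M" and [measurable_cong]: "sets M = sets borel"
    and [measurable]: "f \<in> borel_measurable borel"
  shows "(\<integral>\<^sup>+x. \<integral>\<^sup>+y. f (x - y) \<partial>M \<partial>lborel) = (\<integral>\<^sup>+x. f x \<partial>lborel)"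
proof -
  have "(\<integral>\<^sup>+x. \<integral>\<^sup>+y. f (x - y) \<partial>M \<partial>lborel) = (\<integral>\<^sup>+y. \<integral>\<^sup>+x. f (x - y) \<partial>lborel \<partial>M)"
    using nn_integral_lborel_swap[OF assms(1,2), of "\<lambda>(x, y). f (x - y)"] by simp
  also have "\<dots> = (\<integral>\<^sup>+x. f x \<partial>lborel)"
    by (simp add: nn_integral_lborel_translate prob_space.emeasure_space_1[OF assms(1)])
  finally show ?thesis .
qed

lemma convolution_density_nn_integral:
  fixes f :: "real \<Rightarrow> ennreal"
  assumes "prob_space M" and [measurable_cong]: "sets M = sets borel"
    and [measurable]: "f \<in> borel_measurable borel"
    and "finite_measure (density lborel f)"
  shows "M \<star> density lborel f = density lborel (\<lambda>x. \<integral>\<^sup>+y. f (x - y) \<partial>M)"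
proof (rule measure_eqI)
  interpret M: prob_space M by fact
  fix A assume "A \<in> sets (M \<star> density lborel f)"
  then have [measurable]: "A \<in> sets borel" by simp
  have "emeasure (M \<star> density lborel f) A =
      (\<integral>\<^sup>+x. \<integral>\<^sup>+y. f y * indicator A (x + y) \<partial>lborel \<partial>M)"
    using assms by (subst convolution_emeasure') (auto simp: nn_integral_density)
  also have "\<dots> = (\<integral>\<^sup>+x. \<integral>\<^sup>+y. f (y - x) * indicator A y \<partial>lborel \<partial>M)"
  proof (rule nn_integral_cong)
    fix x :: real
    show "(\<integral>\<^sup>+y. f y * indicator A (x + y) \<partial>lborel) = (\<integral>\<^sup>+y. f (y - x) * indicator A y \<partial>lborel)"
      using nn_integral_lborel_translate[of "\<lambda>y. f y * indicator A (x + y)" x] by simp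
  qed
  also have "\<dots> = (\<integral>\<^sup>+y. (\<integral>\<^sup>+x. f (y - x) \<partial>M) * indicator A y \<partial>lborel)"
    using nn_integral_lborel_swap[OF assms(1,2), of "\<lambda>(y, x). f (y - x) * indicator A y"]
    by (simp add: nn_integral_multc)
  finally show "emeasure (M \<star> density lborel f) A
      = emeasure (density lborel (\<lambda>x. \<integral>\<^sup>+y. f (x - y) \<partial>M)) A"
    by (simp add: emeasure_density)
qed simp

context
  fixes M :: "real measure" and p :: "real \<Rightarrow> real"
  assumes M: "prob_space M" and sets_M[measurable_cong]: "sets M = sets borel"
    and p: "prob_density p"
begin

lemma AE_nn_integral_conv_density:
  "AE x in lborel. (\<integral>\<^sup>+y. ennreal (p (x - y)) \<partial>M) = ennreal (conv_density M p x)"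
proof -
  interpret prob_space M by (rule M)
  have [measurable]: "p \<in> borel_measurable borel" by (rule prob_density_measurable[OF p])
  have "(\<integral>\<^sup>+x. \<integral>\<^sup>+y. ennreal (p (x - y)) \<partial>M \<partial>lborel) \<noteq> \<infinity>"
    using nn_integral_prob_density[OF p] nn_integral_conv[OF M sets_M, of "\<lambda>x. ennreal (p x)"]
    by simp
  then have "AE x in lborel. (\<integral>\<^sup>+y. ennreal (p (x - y)) \<partial>M) \<noteq> \<infinity>"
    by (intro nn_integral_noteq_infinite) auto
  then show ?thesis
    by eventually_elim (auto simp: conv_density_def less_top)
qed

lemma convolution_density_eq_conv_density:
  "M \<star> density lborel (\<lambda>x. ennreal (p x))
     = density lborel (\<lambda>x. ennreal (conv_density M p x))"
proof -
  interpret prob_space M by (rule M)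
  have [measurable]: "p \<in> borel_measurable borel" by (rule prob_density_measurable[OF p])
  have "M \<star> density lborel (\<lambda>x. ennreal (p x))
      = density lborel (\<lambda>x. \<integral>\<^sup>+y. ennreal (p (x - y)) \<partial>M)"
    using prob_space_prob_density[OF p]
    by (intro convolution_density_nn_integral M sets_M) (auto simp: prob_space_def)
  also have "\<dots> = density lborel (\<lambda>x. ennreal (conv_density M p x))"
    using AE_nn_integral_conv_density by (intro density_cong) (auto simp: M sets_M)
  finally show ?thesis .
qed

lemma prob_density_conv_density: "prob_density (conv_density M p)"
proof -
  have [measurable]: "p \<in> borel_measurable borel" by (rule prob_density_measurable[OF p])
  have "(\<integral>\<^sup>+x. ennreal (conv_density M p x) \<partial>lborel)
      = (\<integral>\<^sup>+x. \<integral>\<^sup>+y. ennreal (p (x - y)) \<partial>M \<partial>lborel)"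
    using AE_nn_integral_conv_density by (intro nn_integral_cong_AE) auto
  also have "\<dots> = 1"
    using nn_integral_prob_density[OF p] nn_integral_conv[OF M sets_M, of "\<lambda>x. ennreal (p x)"]
    by simp
  finally show ?thesis
    unfolding prob_density_def using M sets_M by (auto simp: conv_density_nonneg)
qed

lemma conv_density_eq_integral:
  assumes "(\<integral>\<^sup>+y. ennreal (p (x - y)) \<partial>M) = ennreal (conv_density M p x)"
  shows "integrable M (\<lambda>y. p (x - y))" "(\<integral>y. p (x - y) \<partial>M) = conv_density M p x"
proof -
  have [measurable]: "p \<in> borel_measurable borel" by (rule prob_density_measurable[OF p])
  show "integrable M (\<lambda>y. p (x - y))"
    using assms by (intro integrableI_nn_integral_finite[OF _ _ assms])
      (auto simp: prob_density_nonneg[OF p])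
  show "(\<integral>y. p (x - y) \<partial>M) = conv_density M p x"
    by (subst integral_eq_nn_integral) (auto simp: conv_density_def prob_density_nonneg[OF p])
qed

end

lemma convolution_left_commute:
  assumes "finite_measure L" "finite_measure M" "finite_measure N"
    and "sets L = sets borel" "sets M = sets borel" "sets N = sets borel"
  shows "L \<star> (M \<star> N) = (M \<star> (L \<star> N))"
proof -
  have "L \<star> (M \<star> N) = ((L \<star> M) \<star> N)"
    using assms by (intro convolution_associative) auto
  also have "L \<star> M = (M \<star> L)"
    using assms by (intro convolution_commutative) auto
  also have "(M \<star> L) \<star> N = (M \<star> (L \<star> N))"
    using assms by (intro convolution_associative[symmetric]) auto
  finally show ?thesis .
qed

lemma AE_conv_density_left_commute:
  assumes M: "prob_space M" "sets M = sets borel" and T: "prob_space T" "sets T = sets borel"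
    and p: "prob_density p"
  shows "AE x in lborel. conv_density T (conv_density M p) x = conv_density M (conv_density T p) x"
proof -
  have "density lborel (\<lambda>x. ennreal (conv_density T (conv_density M p) x))
      = (T \<star> (M \<star> density lborel (\<lambda>x. ennreal (p x))))"
    using assms by (simp add: convolution_density_eq_conv_density prob_density_conv_density)
  also have "\<dots> = (M \<star> (T \<star> density lborel (\<lambda>x. ennreal (p x))))"
    using assms prob_space_prob_density[OF p]
    by (intro convolution_left_commute) (auto simp: prob_space_def)
  also have "\<dots> = density lborel (\<lambda>x. ennreal (conv_density M (conv_density T p) x))"
    using assms by (simp add: convolution_density_eq_conv_density prob_density_conv_density)
  finally show ?thesis
    using assms by (intro prob_density_AE_unique prob_density_conv_density)
qed

definition dilate_density :: "real \<Rightarrow> (real \<Rightarrow> real) \<Rightarrow> real \<Rightarrow> real" where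
  "dilate_density t p x = p (x / t) / t"

lemma dilate_density_measurable[measurable]:
  assumes [measurable]: "p \<in> borel_measurable borel"
  shows "dilate_density t p \<in> borel_measurable borel"
  unfolding dilate_density_def[abs_def] by measurable

lemma nn_integral_dilate_density:
  fixes g :: "real \<Rightarrow> ennreal"
  assumes "0 < t" and [measurable]: "p \<in> borel_measurable borel" "g \<in> borel_measurable borel"
    and nonneg: "\<And>x. 0 \<le> p x"
  shows "(\<integral>\<^sup>+x. ennreal (dilate_density t p x) * g x \<partial>lborel)
       = (\<integral>\<^sup>+x. ennreal (p x) * g (t * x) \<partial>lborel)"
proof -
  have "(\<integral>\<^sup>+x. ennreal (dilate_density t p x) * g x \<partial>lborel)
      = ennreal t * (\<integral>\<^sup>+x. ennreal (dilate_density t p (t * x)) * g (t * x) \<partial>lborel)"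
    using nn_integral_real_affine[of "\<lambda>x. ennreal (dilate_density t p x) * g x" t 0] \<open>0 < t\<close>
    by simp
  also have "\<dots> = (\<integral>\<^sup>+x. ennreal t * (ennreal (dilate_density t p (t * x)) * g (t * x)) \<partial>lborel)"
    by (rule nn_integral_cmult[symmetric]) simp
  also have "\<dots> = (\<integral>\<^sup>+x. ennreal (p x) * g (t * x) \<partial>lborel)"
    using \<open>0 < t\<close> nonneg
    by (intro nn_integral_cong)
      (simp add: dilate_density_def ennreal_mult'[symmetric] mult.assoc[symmetric])
  finally show ?thesis .
qed

lemma dil_density:
  assumes "0 < t" and [measurable]: "p \<in> borel_measurable borel" and "\<And>x. 0 \<le> p x"
  shows "dil t (density lborel (\<lambda>x. ennreal (p x)))
       = density lborel (\<lambda>x. ennreal (dilate_density t p x))"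
proof (rule measure_eqI)
  fix A assume "A \<in> sets (dil t (density lborel (\<lambda>x. ennreal (p x))))"
  then have [measurable]: "A \<in> sets borel" by (simp add: dil_def)
  have "(\<lambda>x. t * x) -` A \<in> sets borel"
    using measurable_sets[of "(*) t" borel borel A] by simp
  then show "emeasure (dil t (density lborel (\<lambda>x. ennreal (p x)))) A
      = emeasure (density lborel (\<lambda>x. ennreal (dilate_density t p x))) A"
    using assms unfolding dil_def
    by (simp add: emeasure_distr emeasure_density nn_integral_dilate_density indicator_def)
qed (simp add: dil_def)

lemma prob_density_dilate_density:
  assumes "0 < t" "prob_density p"
  shows "prob_density (dilate_density t p)"
  using nn_integral_dilate_density[of t p "\<lambda>_. 1"] assms
  by (auto simp: prob_density_def dilate_density_def)

lemma xlnx_dilate_density: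
  assumes "0 < t" "0 \<le> p x"
  shows "dilate_density t p (t * x) * ln (dilate_density t p (t * x))
       = (p x * ln (p x) - p x * ln t) / t"
  using assms by (cases "p x = 0") (auto simp: dilate_density_def ln_div field_simps)

lemma
  assumes "0 < t" "prob_density p" and int: "integrable lborel (\<lambda>x. p x * ln (p x))"
  shows integrable_xlnx_dilate_density:
      "integrable lborel (\<lambda>x. dilate_density t p x * ln (dilate_density t p x))"
    and integral_xlnx_dilate_density:
      "(\<integral>x. dilate_density t p x * ln (dilate_density t p x) \<partial>lborel)
         = (\<integral>x. p x * ln (p x) \<partial>lborel) - ln t"
proof -
  let ?h = "\<lambda>x. dilate_density t p x * ln (dilate_density t p x)"
  have scaled: "?h (0 + t * x) = (p x * ln (p x) - p x * ln t) / t" for x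
    using xlnx_dilate_density[of t p x] \<open>0 < t\<close> prob_density_nonneg[OF \<open>prob_density p\<close>]
    by simp
  have "integrable lborel (\<lambda>x. (p x * ln (p x) - p x * ln t) / t)"
    using int integrable_prob_density[OF \<open>prob_density p\<close>] by auto
  then show "integrable lborel ?h"
    using lborel_integrable_real_affine_iff[of t ?h 0] \<open>0 < t\<close> by (simp only: scaled)
  have "(\<integral>x. ?h x \<partial>lborel) = t * (\<integral>x. (p x * ln (p x) - p x * ln t) / t \<partial>lborel)"
    using lborel_integral_real_affine[of t ?h 0] \<open>0 < t\<close> by (simp only: scaled) simp
  also have "\<dots> = (\<integral>x. p x * ln (p x) \<partial>lborel) - ln t"
    using \<open>0 < t\<close> int integrable_prob_density[OF \<open>prob_density p\<close>]
      integral_prob_density[OF \<open>prob_density p\<close>] by simp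
  finally show "(\<integral>x. ?h x \<partial>lborel) = (\<integral>x. p x * ln (p x) \<partial>lborel) - ln t" .
qed

lemma dil_convolution:
  assumes "finite_measure M" "finite_measure N"
    and [measurable_cong]: "sets M = sets borel" "sets N = sets borel"
  shows "dil t (M \<star> N) = (dil t M \<star> dil t N)"
proof (rule measure_eqI)
  interpret N: finite_measure N by fact
  have fin: "finite_measure (dil t M)" "finite_measure (dil t N)"
    using assms unfolding dil_def by (auto intro: finite_measure.finite_measure_distr)
  fix A assume "A \<in> sets (dil t (M \<star> N))"
  then have [measurable]: "A \<in> sets borel" by (simp add: dil_def)
  have "emeasure (dil t (M \<star> N)) A = (\<integral>\<^sup>+z. indicator A z \<partial>dil t (M \<star> N))"
    by (simp add: dil_def)
  also have "\<dots> = (\<integral>\<^sup>+z. indicator A (t * z) \<partial>(M \<star> N))"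
    unfolding dil_def by (subst nn_integral_distr) auto
  also have "\<dots> = (\<integral>\<^sup>+x. \<integral>\<^sup>+y. indicator A (t * (x + y)) \<partial>N \<partial>M)"
    using assms by (intro nn_integral_convolution) auto
  also have "\<dots> = emeasure (dil t M \<star> dil t N) A"
    using assms fin unfolding dil_def
    by (simp add: convolution_emeasure' nn_integral_distr distrib_left)
  finally show "emeasure (dil t (M \<star> N)) A = emeasure (dil t M \<star> dil t N) A" .
qed (simp add: dil_def)

section \<open>Finiteness of the entropy\<close>

definition log_moment :: "real measure \<Rightarrow> ennreal" where
  "log_moment \<rho> = (\<integral>\<^sup>+x. ennreal (ln (1 + \<bar>x\<bar>)) \<partial>\<rho>)"

lemma log_moment_density:
  assumes [measurable]: "p \<in> borel_measurable borel" and "\<And>x. 0 \<le> p x"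
  shows "log_moment (density lborel (\<lambda>x. ennreal (p x)))
       = (\<integral>\<^sup>+x. ennreal (p x * ln (1 + \<bar>x\<bar>)) \<partial>lborel)"
  unfolding log_moment_def using assms
  by (subst nn_integral_density) (auto intro!: nn_integral_cong simp: ennreal_mult)

lemma log_moment_less_top: "integrable M (\<lambda>x. ln (1 + \<bar>x\<bar>)) \<Longrightarrow> log_moment M < \<infinity>"
  unfolding log_moment_def integrable_iff_bounded by simp

lemma ln_one_plus_abs_add_le: "ln (1 + \<bar>x + y\<bar>) \<le> ln (1 + \<bar>x\<bar>) + ln (1 + \<bar>y::real\<bar>)"
proof -
  have "1 + \<bar>x + y\<bar> \<le> (1 + \<bar>x\<bar>) * (1 + \<bar>y\<bar>)"
  proof -
    have "(1 + \<bar>x\<bar>) * (1 + \<bar>y\<bar>) = 1 + \<bar>x\<bar> + \<bar>y\<bar> + \<bar>x\<bar> * \<bar>y\<bar>"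
      by (simp add: algebra_simps)
    then show ?thesis
      using abs_triangle_ineq[of x y] abs_ge_zero[of "x * y"] unfolding abs_mult by linarith
  qed
  then have "ln (1 + \<bar>x + y\<bar>) \<le> ln ((1 + \<bar>x\<bar>) * (1 + \<bar>y\<bar>))"
    by (intro ln_mono) auto
  also have "\<dots> = ln (1 + \<bar>x\<bar>) + ln (1 + \<bar>y\<bar>)"
    by (simp add: ln_mult add_nonneg_eq_0_iff)
  finally show ?thesis .
qed

lemma log_moment_convolution_le:
  assumes "prob_space M" "prob_space N" and [measurable_cong]: "sets M = sets borel" "sets N = sets borel"
  shows "log_moment (M \<star> N) \<le> log_moment M + log_moment N"
proof -
  interpret M: prob_space M by fact
  interpret N: prob_space N by fact
  have "log_moment (M \<star> N) = (\<integral>\<^sup>+x. \<integral>\<^sup>+y. ennreal (ln (1 + \<bar>x + y\<bar>)) \<partial>N \<partial>M)"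
    unfolding log_moment_def using assms
    by (intro nn_integral_convolution) (auto intro: M.finite_measure_axioms N.finite_measure_axioms)
  also have "\<dots> \<le> (\<integral>\<^sup>+x. \<integral>\<^sup>+y. ennreal (ln (1 + \<bar>x\<bar>)) + ennreal (ln (1 + \<bar>y\<bar>)) \<partial>N \<partial>M)"
    by (intro nn_integral_mono)
      (auto simp: ennreal_plus[symmetric] simp del: ennreal_plus intro!: ennreal_leI ln_one_plus_abs_add_le)
  also have "\<dots> = log_moment M + log_moment N"
    unfolding log_moment_def by (simp add: nn_integral_add N.emeasure_space_1 M.emeasure_space_1)
  finally show ?thesis .
qed

lemma log_moment_dil_le:
  assumes [measurable_cong]: "sets M = sets borel" and "0 < t" "t \<le> 1"
  shows "log_moment (dil t M) \<le> log_moment M"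
  unfolding log_moment_def dil_def using assms
  by (subst nn_integral_distr)
    (auto intro!: nn_integral_mono ennreal_leI ln_mono simp: abs_mult mult_left_le_one_le add_pos_nonneg)

lemma neg_xlnx_le_sqrt:
  assumes "0 < a" shows "- (a * ln a) \<le> 2 * sqrt a"
proof -
  have "ln (inverse (sqrt a)) \<le> inverse (sqrt a) - 1"
    using assms by (intro ln_le_minus_one) auto
  then have "- ln a \<le> 2 * inverse (sqrt a)"
    using assms by (simp add: ln_inverse ln_sqrt)
  then have "a * (- ln a) \<le> a * (2 * inverse (sqrt a))"
    using assms by (intro mult_left_mono) auto
  also have "a * (2 * inverse (sqrt a)) = 2 * sqrt a"
    using assms by (simp add: field_simps)
  finally show ?thesis by simp
qed

text \<open>Either \<open>a \<ge> (1 + \<bar>x\<bar>)\<^sup>-\<^sup>4\<close>, so that \<open>- ln a \<le> 4 ln (1 + \<bar>x\<bar>)\<close>, or \<open>a\<close> is so small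
  that \<open>- a ln a \<le> 2 \<surd>a \<le> 2 / (1 + x\<^sup>2)\<close>.\<close>
lemma neg_xlnx_le:
  fixes x :: real
  assumes "0 \<le> a"
  shows "max 0 (- (a * ln a)) \<le> 4 * (a * ln (1 + \<bar>x\<bar>)) + 2 * inverse (1 + x\<^sup>2)"
proof -
  define w where "w = 1 + \<bar>x\<bar>"
  have "1 \<le> w" by (simp add: w_def)
  have nonneg: "0 \<le> 4 * (a * ln w)" "0 \<le> inverse (1 + x\<^sup>2)"
    using \<open>0 \<le> a\<close> \<open>1 \<le> w\<close> by (auto simp: add_pos_nonneg)
  consider "a = 0" | "inverse (w ^ 4) \<le> a" "0 < a" | "a < inverse (w ^ 4)" "0 < a"
    using assms by force
  then have "- (a * ln a) \<le> 4 * (a * ln w) + 2 * inverse (1 + x\<^sup>2)"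
  proof cases
    case 1
    then show ?thesis using nonneg by simp
  next
    case 2
    then have "ln (inverse (w ^ 4)) \<le> ln a"
      using \<open>1 \<le> w\<close> by (intro ln_mono) auto
    then have "- ln a \<le> 4 * ln w"
      by (simp add: ln_inverse ln_realpow)
    then have "a * (- ln a) \<le> a * (4 * ln w)"
      using 2 by (intro mult_left_mono) auto
    then have "- (a * ln a) \<le> 4 * (a * ln w)" by (simp add: algebra_simps)
    then show ?thesis using nonneg by linarith
  next
    case 3
    then have "sqrt a < sqrt ((inverse (w\<^sup>2))\<^sup>2)"
      by (intro real_sqrt_less_mono) (simp add: power_inverse[symmetric] power_mult[symmetric])
    also have "\<dots> = inverse (w\<^sup>2)"
      using \<open>1 \<le> w\<close> by simp
    also have "\<dots> \<le> inverse (1 + x\<^sup>2)"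
      by (intro le_imp_inverse_le) (auto simp: w_def power2_eq_square algebra_simps add_pos_nonneg)
    finally show ?thesis
      using neg_xlnx_le_sqrt[OF \<open>0 < a\<close>] nonneg by simp
  qed
  then show ?thesis using nonneg unfolding w_def by simp
qed

lemma nn_integral_inverse_1_plus_square_less_top:
  "(\<integral>\<^sup>+x. ennreal (inverse (1 + x\<^sup>2)) \<partial>lborel) < \<infinity>"
proof -
  have "integrable lborel (\<lambda>x::real. inverse (1 + x\<^sup>2))"
    using integrable_inverse_1_plus_square unfolding set_integrable_def by (simp add: einterval_iff)
  then show ?thesis
    unfolding integrable_iff_bounded by (simp add: add_pos_nonneg)
qed

lemma integrable_xlnx:
  assumes [measurable]: "p \<in> borel_measurable borel" and nonneg: "\<And>x. 0 \<le> p x"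
    and log_moment: "log_moment (density lborel (\<lambda>x. ennreal (p x))) < \<infinity>"
    and pos: "(\<integral>\<^sup>+x. ennreal (max 0 (p x * ln (p x))) \<partial>lborel) < \<infinity>"
  shows "integrable lborel (\<lambda>x. p x * ln (p x))"
proof -
  have "(\<integral>\<^sup>+x. ennreal (max 0 (- (p x * ln (p x)))) \<partial>lborel)
      \<le> (\<integral>\<^sup>+x. 4 * ennreal (p x * ln (1 + \<bar>x\<bar>)) + 2 * ennreal (inverse (1 + x\<^sup>2)) \<partial>lborel)"
  proof (rule nn_integral_mono)
    fix x
    have "ennreal (max 0 (- (p x * ln (p x))))
        \<le> ennreal (4 * (p x * ln (1 + \<bar>x\<bar>)) + 2 * inverse (1 + x\<^sup>2))"
      by (intro ennreal_leI neg_xlnx_le nonneg)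
    also have "\<dots> = 4 * ennreal (p x * ln (1 + \<bar>x\<bar>)) + 2 * ennreal (inverse (1 + x\<^sup>2))"
      using nonneg[of x] by (simp add: ennreal_mult' add_pos_nonneg)
    finally show "ennreal (max 0 (- (p x * ln (p x))))
        \<le> 4 * ennreal (p x * ln (1 + \<bar>x\<bar>)) + 2 * ennreal (inverse (1 + x\<^sup>2))" .
  qed
  also have "\<dots> = 4 * log_moment (density lborel (\<lambda>x. ennreal (p x)))
      + 2 * (\<integral>\<^sup>+x. ennreal (inverse (1 + x\<^sup>2)) \<partial>lborel)"
    using nonneg by (simp add: nn_integral_add nn_integral_cmult log_moment_density)
  also have "\<dots> < \<infinity>"
    using log_moment nn_integral_inverse_1_plus_square_less_top by (simp add: ennreal_mult_less_top)
  finally have neg: "(\<integral>\<^sup>+x. ennreal (max 0 (- (p x * ln (p x)))) \<partial>lborel) < \<infinity>" .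
  have "(\<integral>\<^sup>+x. ennreal (norm (p x * ln (p x))) \<partial>lborel)
      = (\<integral>\<^sup>+x. ennreal (max 0 (p x * ln (p x))) + ennreal (max 0 (- (p x * ln (p x)))) \<partial>lborel)"
    by (intro nn_integral_cong) (auto simp: max_def simp flip: ennreal_plus)
  also have "\<dots> < \<infinity>"
    using pos neg by (simp add: nn_integral_add)
  finally show ?thesis by (intro integrableI_bounded) auto
qed

lemma one_minus_inverse_le_ln: "0 < r \<Longrightarrow> 1 - 1 / r \<le> ln (r::real)"
  using ln_le_minus_one[of "1 / r"] by (simp add: ln_div)

lemma kl_tangent:
  assumes "0 < a" "0 < b" "0 < A" "0 < B"
  shows "a * ln (A / B) + b * (1 - A / B) \<le> a * ln (a / b) - a + (b::real)"
proof -
  define r where "r = (a / b) / (A / B)"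
  have "0 < r" using assms by (simp add: r_def)
  then have "a * (1 - 1 / r) \<le> a * ln r"
    using assms by (intro mult_left_mono one_minus_inverse_le_ln) auto
  moreover have "ln r = ln (a / b) - ln (A / B)"
    unfolding r_def using assms by (subst ln_div) auto
  moreover have "a * (1 / r) = b * (A / B)"
    using assms by (simp add: r_def field_simps)
  ultimately show ?thesis by (simp add: algebra_simps)
qed

lemma xlnx_tangent:
  assumes "0 \<le> a" "0 < A"
  shows "A * ln A + (1 + ln A) * (a - A) \<le> a * ln (a::real)"
proof (cases "a = 0")
  case False
  then show ?thesis
    using kl_tangent[of a A 1 1] assms by (simp add: ln_div algebra_simps)
qed (use assms in \<open>simp add: algebra_simps\<close>)

lemma ennreal_integral_le_nn_integral:
  fixes f :: "'a \<Rightarrow> real"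
  assumes "integrable M f"
  shows "ennreal (\<integral>x. f x \<partial>M) \<le> (\<integral>\<^sup>+x. ennreal (f x) \<partial>M)"
proof -
  have "(\<integral>x. f x \<partial>M) \<le> (\<integral>x. max 0 (f x) \<partial>M)"
    using assms by (intro integral_mono integrable_max) auto
  then have "ennreal (\<integral>x. f x \<partial>M) \<le> ennreal (\<integral>x. max 0 (f x) \<partial>M)"
    by (rule ennreal_leI)
  also have "\<dots> = (\<integral>\<^sup>+x. ennreal (f x) \<partial>M)"
    using assms by (subst nn_integral_eq_integral[symmetric]) auto
  finally show ?thesis .
qed

lemma (in prob_space) pos_xlnx_expectation_le:
  assumes "integrable M a" "\<And>y. 0 \<le> a y"
  shows "ennreal (max 0 (expectation a * ln (expectation a)))
       \<le> (\<integral>\<^sup>+y. ennreal (max 0 (a y * ln (a y))) \<partial>M)"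
proof -
  define A where "A = expectation a"
  show ?thesis
  proof (cases "A \<le> 1")
    case True
    have "0 \<le> A" unfolding A_def using assms by (auto intro!: integral_nonneg_AE)
    with True have "A * ln A \<le> 0"
      by (cases "A = 0") (auto intro!: mult_nonneg_nonpos)
    then show ?thesis by (simp add: A_def[symmetric] max_def)
  next
    case False
    define L where "L y = A * ln A + (1 + ln A) * (a y - A)" for y
    have "expectation L = A * ln A"
      unfolding L_def using assms by (simp add: A_def prob_space)
    then have "ennreal (max 0 (A * ln A)) = ennreal (expectation L)"
      by simp
    also have "\<dots> \<le> (\<integral>\<^sup>+y. ennreal (L y) \<partial>M)"
      unfolding L_def using assms by (intro ennreal_integral_le_nn_integral) auto
    also have "\<dots> \<le> (\<integral>\<^sup>+y. ennreal (max 0 (a y * ln (a y))) \<partial>M)"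
      using xlnx_tangent[OF assms(2), of A] False
      by (intro nn_integral_mono ennreal_leI) (auto simp: L_def intro: max.coboundedI2)
    finally show ?thesis by (simp add: A_def)
  qed
qed

lemma nn_integral_pos_xlnx_conv_density_le:
  assumes M: "prob_space M" and [measurable_cong]: "sets M = sets borel" and p: "prob_density p"
  shows "(\<integral>\<^sup>+x. ennreal (max 0 (conv_density M p x * ln (conv_density M p x))) \<partial>lborel)
       \<le> (\<integral>\<^sup>+x. ennreal (max 0 (p x * ln (p x))) \<partial>lborel)"
proof -
  have [measurable]: "p \<in> borel_measurable borel" by (rule prob_density_measurable[OF p])
  have "(\<integral>\<^sup>+x. ennreal (max 0 (conv_density M p x * ln (conv_density M p x))) \<partial>lborel)
      \<le> (\<integral>\<^sup>+x. \<integral>\<^sup>+y. ennreal (max 0 (p (x - y) * ln (p (x - y)))) \<partial>M \<partial>lborel)"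
  proof (rule nn_integral_mono_AE)
    show "AE x in lborel. ennreal (max 0 (conv_density M p x * ln (conv_density M p x)))
        \<le> (\<integral>\<^sup>+y. ennreal (max 0 (p (x - y) * ln (p (x - y)))) \<partial>M)"
      using AE_nn_integral_conv_density[OF assms]
    proof eventually_elim
      case (elim x)
      note conv_density_eq_integral[OF assms elim]
      then show ?case
        using prob_space.pos_xlnx_expectation_le[OF M, of "\<lambda>y. p (x - y)"]
          prob_density_nonneg[OF p] by simp
    qed
  qed
  also have "\<dots> = (\<integral>\<^sup>+x. ennreal (max 0 (p x * ln (p x))) \<partial>lborel)"
    by (rule nn_integral_conv[OF assms(1,2), of "\<lambda>x. ennreal (max 0 (p x * ln (p x)))"]) simp
  finally show ?thesis .
qed

lemma integrable_xlnx_conv_density: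
  assumes M: "prob_space M" and sets_M[measurable_cong]: "sets M = sets borel"
    and "log_moment M < \<infinity>" and p: "prob_density p"
    and "integrable lborel (\<lambda>x. p x * ln (p x))"
    and "log_moment (density lborel (\<lambda>x. ennreal (p x))) < \<infinity>"
  shows "integrable lborel (\<lambda>x. conv_density M p x * ln (conv_density M p x))"
proof (rule integrable_xlnx)
  show "conv_density M p \<in> borel_measurable borel"
    using prob_density_conv_density[OF M sets_M p] by (rule prob_density_measurable)
  have "log_moment (density lborel (\<lambda>x. ennreal (conv_density M p x)))
      \<le> log_moment M + log_moment (density lborel (\<lambda>x. ennreal (p x)))"
    using log_moment_convolution_le[OF M prob_space_prob_density[OF p]]
    by (simp add: convolution_density_eq_conv_density[OF M sets_M p] sets_M)
  also have "\<dots> < \<infinity>"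
    using assms by simp
  finally show "log_moment (density lborel (\<lambda>x. ennreal (conv_density M p x))) < \<infinity>" .
  have "(\<integral>\<^sup>+x. ennreal (max 0 (p x * ln (p x))) \<partial>lborel)
      \<le> (\<integral>\<^sup>+x. ennreal (norm (p x * ln (p x))) \<partial>lborel)"
    by (intro nn_integral_mono ennreal_leI) auto
  also have "\<dots> < \<infinity>"
    using assms(5) unfolding integrable_iff_bounded ..
  finally have "(\<integral>\<^sup>+x. ennreal (max 0 (p x * ln (p x))) \<partial>lborel) < \<infinity>" .
  then show "(\<integral>\<^sup>+x. ennreal (max 0 (conv_density M p x * ln (conv_density M p x))) \<partial>lborel) < \<infinity>"
    using nn_integral_pos_xlnx_conv_density_le[OF M sets_M p] by (rule le_less_trans[rotated])
qed (rule conv_density_nonneg)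

section \<open>The entropy gain of a convolution as an averaged divergence\<close>

text \<open>The integrand \<open>a ln (a / b) - a + b\<close> of the Kullback-Leibler divergence of non-normalised
  densities, extended to \<open>a = 0\<close> and \<open>b = 0\<close> by lower semicontinuity.\<close>
definition kl_integrand :: "real \<Rightarrow> real \<Rightarrow> ennreal" where
  "kl_integrand a b =
     (if a = 0 then ennreal b else if b = 0 then \<infinity> else ennreal (a * ln (a / b) - a + b))"

lemma kl_integrand_measurable[measurable]:
  assumes [measurable]: "f \<in> borel_measurable M" "g \<in> borel_measurable M"
  shows "(\<lambda>x. kl_integrand (f x) (g x)) \<in> borel_measurable M"
  unfolding kl_integrand_def by measurable

lemma kl_integrand_pos:
  assumes "0 < a" "0 < b"
  shows "kl_integrand a b = ennreal (a * ln (a / b) - a + b)"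
    and "0 \<le> a * ln (a / b) - a + b"
  using assms kl_tangent[of a b 1 1] by (auto simp: kl_integrand_def)

text \<open>The identity \<open>kl_integrand a b = a ln a - a ln b - a + b\<close>, with all possibly negative terms moved
  across so that it holds in \<open>ennreal\<close>.\<close>
lemma kl_integrand_split:
  assumes "0 \<le> a" "0 \<le> b" "0 < b \<or> a = 0"
  shows "kl_integrand a b + ennreal (- (a * ln a)) + ennreal (a * ln b) + ennreal a
       = ennreal (a * ln a) + ennreal (- (a * ln b)) + ennreal b"
proof (cases "a = 0")
  case False
  then have "0 < a" "0 < b" using assms by auto
  define k where "k = a * ln (a / b) - a + b"
  have "0 \<le> k" "kl_integrand a b = ennreal k"
    using kl_integrand_pos[OF \<open>0 < a\<close> \<open>0 < b\<close>] by (simp_all add: k_def)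
  moreover have "k + max 0 (- (a * ln a)) + max 0 (a * ln b) + a
      = max 0 (a * ln a) + max 0 (- (a * ln b)) + b"
    using \<open>0 < a\<close> \<open>0 < b\<close> by (auto simp: k_def ln_div max_def algebra_simps)
  then have "ennreal (k + max 0 (- (a * ln a)) + max 0 (a * ln b) + a)
      = ennreal (max 0 (a * ln a) + max 0 (- (a * ln b)) + b)"
    by simp
  ultimately show ?thesis
    using \<open>0 < a\<close> \<open>0 < b\<close> by simp
qed (simp add: kl_integrand_def)

text \<open>Jensen's inequality for the jointly convex function \<open>kl_integrand\<close>.\<close>
lemma (in prob_space) kl_integrand_expectation_le:
  assumes "integrable M a" "integrable M b" and nonneg: "\<And>y. 0 \<le> a y" "\<And>y. 0 \<le> b y"
  shows "kl_integrand (expectation a) (expectation b) \<le> (\<integral>\<^sup>+y. kl_integrand (a y) (b y) \<partial>M)"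
proof -
  define A B where "A = expectation a" and "B = expectation b"
  have "0 \<le> A" "0 \<le> B"
    unfolding A_def B_def using nonneg by (auto intro!: integral_nonneg_AE)
  have AE_zero_iff: "f = a \<or> f = b \<Longrightarrow> expectation f = 0 \<longleftrightarrow> (AE y in M. f y = 0)" for f
    using assms by (subst integral_nonneg_eq_0_iff_AE) auto
  consider "A = 0" | "0 < A" "B = 0" | "0 < A" "0 < B"
    using \<open>0 \<le> A\<close> \<open>0 \<le> B\<close> by force
  then show ?thesis
  proof cases
    case 1
    then have "AE y in M. a y = 0" using AE_zero_iff[of a] by (simp add: A_def)
    then have "(\<integral>\<^sup>+y. kl_integrand (a y) (b y) \<partial>M) = (\<integral>\<^sup>+y. ennreal (b y) \<partial>M)"
      by (intro nn_integral_cong_AE) (auto simp: kl_integrand_def)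
    also have "\<dots> = ennreal B"
      unfolding B_def using assms by (intro nn_integral_eq_integral) auto
    finally show ?thesis using 1 by (simp add: kl_integrand_def A_def B_def)
  next
    case 2
    have "(\<integral>\<^sup>+y. kl_integrand (a y) (b y) \<partial>M) = \<infinity>"
    proof (rule ccontr)
      assume "(\<integral>\<^sup>+y. kl_integrand (a y) (b y) \<partial>M) \<noteq> \<infinity>"
      then have "AE y in M. kl_integrand (a y) (b y) \<noteq> \<infinity>"
        using assms by (intro nn_integral_noteq_infinite) auto
      moreover have "AE y in M. b y = 0" using AE_zero_iff[of b] 2 by (simp add: B_def)
      ultimately have "AE y in M. a y = 0"
        by eventually_elim (auto simp: kl_integrand_def split: if_splits)
      then show False using AE_zero_iff[of a] 2 by (simp add: A_def)
    qed
    then show ?thesis by simp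
  next
    case 3
    note AB = this
    \<comment> \<open>integrate the tangent plane of \<open>kl_integrand\<close> at \<open>(A, B)\<close>\<close>
    define L where "L y = a y * ln (A / B) + b y * (1 - A / B)" for y
    have "expectation L = A * ln (A / B) + B * (1 - A / B)"
      unfolding L_def using assms by (simp add: A_def B_def)
    also have "\<dots> = A * ln (A / B) - A + B"
      using 3 by (simp add: algebra_simps)
    finally have "kl_integrand A B = ennreal (expectation L)"
      using 3 by (simp add: kl_integrand_def)
    also have "\<dots> \<le> (\<integral>\<^sup>+y. ennreal (L y) \<partial>M)"
      unfolding L_def using assms by (intro ennreal_integral_le_nn_integral) auto
    also have "\<dots> \<le> (\<integral>\<^sup>+y. kl_integrand (a y) (b y) \<partial>M)"
    proof (intro nn_integral_mono)
      fix y
      consider "a y = 0" | "0 < a y" "b y = 0" | "0 < a y" "0 < b y"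
        using nonneg[of y] by force
      then show "ennreal (L y) \<le> kl_integrand (a y) (b y)"
      proof cases
        case 1
        then show ?thesis
          using AB nonneg(2)[of y] by (auto simp: L_def kl_integrand_def mult_left_le intro!: ennreal_leI)
      next
        case 3
        then show ?thesis
          using kl_tangent[OF 3 AB] by (simp add: L_def kl_integrand_def ennreal_leI)
      qed (simp add: kl_integrand_def)
    qed
    finally show ?thesis by (simp add: A_def B_def)
  qed
qed

definition translate_divergence :: "real measure \<Rightarrow> (real \<Rightarrow> real) \<Rightarrow> (real \<Rightarrow> real) \<Rightarrow> ennreal" where
  "translate_divergence T p g = (\<integral>\<^sup>+x. \<integral>\<^sup>+z. kl_integrand (p (x - z)) (g x) \<partial>T \<partial>lborel)"

lemma nn_integral_kl_integrand_translates:
  assumes T: "prob_space T" and [measurable_cong]: "sets T = sets borel" and p: "prob_density p"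
    and "0 \<le> c" and mean: "(\<integral>\<^sup>+z. ennreal (p (x - z)) \<partial>T) = ennreal c"
  shows "(\<integral>\<^sup>+z. kl_integrand (p (x - z)) c \<partial>T) + (\<integral>\<^sup>+z. ennreal (- (p (x - z) * ln (p (x - z)))) \<partial>T)
        + ennreal (c * ln c) + ennreal c
       = (\<integral>\<^sup>+z. ennreal (p (x - z) * ln (p (x - z))) \<partial>T) + ennreal (- (c * ln c)) + ennreal c"
proof -
  interpret prob_space T by (rule T)
  have [measurable]: "p \<in> borel_measurable borel" by (rule prob_density_measurable[OF p])
  note nonneg = prob_density_nonneg[OF p]
  have "AE z in T. 0 < c \<or> p (x - z) = 0"
  proof (cases "c = 0")
    case True
    then have "AE z in T. ennreal (p (x - z)) = 0"
      using mean by (subst nn_integral_0_iff_AE[symmetric]) auto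
    then show ?thesis by eventually_elim (metis ennreal_eq_0_iff nonneg order_antisym)
  qed (use \<open>0 \<le> c\<close> in simp)
  then have "(\<integral>\<^sup>+z. kl_integrand (p (x - z)) c + ennreal (- (p (x - z) * ln (p (x - z))))
        + ennreal (p (x - z) * ln c) + ennreal (p (x - z)) \<partial>T)
      = (\<integral>\<^sup>+z. ennreal (p (x - z) * ln (p (x - z))) + ennreal (- (p (x - z) * ln c)) + ennreal c \<partial>T)"
    by (intro nn_integral_cong_AE) (auto elim!: eventually_mono intro!: kl_integrand_split nonneg \<open>0 \<le> c\<close>)
  moreover have "(\<integral>\<^sup>+z. ennreal (p (x - z) * k) \<partial>T) = ennreal (c * k)" for k
    using nonneg \<open>0 \<le> c\<close> by (simp add: ennreal_mult' nn_integral_multc mean)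
  from this[of "ln c"] this[of "- ln c"]
  have "(\<integral>\<^sup>+z. ennreal (p (x - z) * ln c) \<partial>T) = ennreal (c * ln c)"
    "(\<integral>\<^sup>+z. ennreal (- (p (x - z) * ln c)) \<partial>T) = ennreal (- (c * ln c))"
    by simp_all
  ultimately show ?thesis
    using mean by (simp add: nn_integral_add emeasure_space_1)
qed

lemma translate_divergence_add_xlnx_parts:
  assumes T: "prob_space T" and sets_T[measurable_cong]: "sets T = sets borel"
    and p: "prob_density p" and g: "prob_density g"
    and mean: "AE x in lborel. (\<integral>\<^sup>+z. ennreal (p (x - z)) \<partial>T) = ennreal (g x)"
  shows "translate_divergence T p g + (\<integral>\<^sup>+x. ennreal (- (p x * ln (p x))) \<partial>lborel)
        + (\<integral>\<^sup>+x. ennreal (g x * ln (g x)) \<partial>lborel) + 1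
       = (\<integral>\<^sup>+x. ennreal (p x * ln (p x)) \<partial>lborel)
        + (\<integral>\<^sup>+x. ennreal (- (g x * ln (g x))) \<partial>lborel) + 1"
proof -
  interpret prob_space T by (rule T)
  have [measurable]: "p \<in> borel_measurable borel" "g \<in> borel_measurable borel"
    using p g by (auto intro: prob_density_measurable)
  have "(\<integral>\<^sup>+x. (\<integral>\<^sup>+z. kl_integrand (p (x - z)) (g x) \<partial>T)
        + (\<integral>\<^sup>+z. ennreal (- (p (x - z) * ln (p (x - z)))) \<partial>T)
        + ennreal (g x * ln (g x)) + ennreal (g x) \<partial>lborel)
      = (\<integral>\<^sup>+x. (\<integral>\<^sup>+z. ennreal (p (x - z) * ln (p (x - z))) \<partial>T)
        + ennreal (- (g x * ln (g x))) + ennreal (g x) \<partial>lborel)"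
    using mean
    by (intro nn_integral_cong_AE, eventually_elim)
      (intro nn_integral_kl_integrand_translates T sets_T p prob_density_nonneg[OF g])
  then show ?thesis
    using nn_integral_prob_density[OF g]
      nn_integral_conv[OF T sets_T, of "\<lambda>x. ennreal (p x * ln (p x))"]
      nn_integral_conv[OF T sets_T, of "\<lambda>x. ennreal (- (p x * ln (p x)))"]
    by (simp add: nn_integral_add translate_divergence_def)
qed

lemma translate_divergence_eq_entropy_gain:
  assumes T: "prob_space T" and sets_T: "sets T = sets borel"
    and p: "prob_density p" and g: "prob_density g"
    and mean: "AE x in lborel. (\<integral>\<^sup>+z. ennreal (p (x - z)) \<partial>T) = ennreal (g x)"
    and int_p: "integrable lborel (\<lambda>x. p x * ln (p x))"
    and int_g: "integrable lborel (\<lambda>x. g x * ln (g x))"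
  shows "translate_divergence T p g
           = ennreal ((\<integral>x. p x * ln (p x) \<partial>lborel) - (\<integral>x. g x * ln (g x) \<partial>lborel))"
    and "(\<integral>x. g x * ln (g x) \<partial>lborel) \<le> (\<integral>x. p x * ln (p x) \<partial>lborel)"
proof -
  obtain pos_p neg_p where p_parts:
    "(\<integral>\<^sup>+x. ennreal (p x * ln (p x)) \<partial>lborel) = ennreal pos_p"
    "(\<integral>\<^sup>+x. ennreal (- (p x * ln (p x))) \<partial>lborel) = ennreal neg_p"
    "0 \<le> pos_p" "0 \<le> neg_p" "(\<integral>x. p x * ln (p x) \<partial>lborel) = pos_p - neg_p"
    using integrable_nn_integral_parts[OF int_p] by blast
  obtain pos_g neg_g where g_parts:
    "(\<integral>\<^sup>+x. ennreal (g x * ln (g x)) \<partial>lborel) = ennreal pos_g"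
    "(\<integral>\<^sup>+x. ennreal (- (g x * ln (g x))) \<partial>lborel) = ennreal neg_g"
    "0 \<le> pos_g" "0 \<le> neg_g" "(\<integral>x. g x * ln (g x) \<partial>lborel) = pos_g - neg_g"
    using integrable_nn_integral_parts[OF int_g] by blast
  have "translate_divergence T p g + ennreal (neg_p + pos_g + 1) = ennreal (pos_p + neg_g + 1)"
    using translate_divergence_add_xlnx_parts[OF assms(1-5)] p_parts g_parts
    by (simp add: add.assoc)
  moreover from this obtain r where "translate_divergence T p g = ennreal r" "0 \<le> r"
    by (cases "translate_divergence T p g") auto
  ultimately have "r = (pos_p - neg_p) - (pos_g - neg_g)"
    using p_parts g_parts by (simp flip: ennreal_plus)
  with \<open>0 \<le> r\<close> \<open>translate_divergence T p g = ennreal r\<close> p_parts(5) g_parts(5)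
  show "translate_divergence T p g
          = ennreal ((\<integral>x. p x * ln (p x) \<partial>lborel) - (\<integral>x. g x * ln (g x) \<partial>lborel))"
    and "(\<integral>x. g x * ln (g x) \<partial>lborel) \<le> (\<integral>x. p x * ln (p x) \<partial>lborel)"
    by simp_all
qed

text \<open>Joint convexity of \<open>kl_integrand\<close> (Jensen under \<open>M\<close>), applied at every point and translate.\<close>
lemma translate_divergence_conv_density_le:
  assumes M: "prob_space M" and sets_M[measurable_cong]: "sets M = sets borel"
    and T: "prob_space T" and sets_T[measurable_cong]: "sets T = sets borel"
    and p: "prob_density p" and g: "prob_density g"
  shows "translate_divergence T (conv_density M p) (conv_density M g) \<le> translate_divergence T p g"
proof -
  interpret M: prob_space M by (rule M)
  interpret T: prob_space T by (rule T)
  have [measurable]: "p \<in> borel_measurable borel" "g \<in> borel_measurable borel"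
    "conv_density M p \<in> borel_measurable borel" "conv_density M g \<in> borel_measurable borel"
    using p g by (auto intro: prob_density_measurable prob_density_conv_density[OF M sets_M])
  let ?kl = "\<lambda>z u. kl_integrand (p (u - z)) (g u)"
  have pointwise: "(\<integral>\<^sup>+x. kl_integrand (conv_density M p (x - z)) (conv_density M g x) \<partial>lborel)
      \<le> (\<integral>\<^sup>+x. \<integral>\<^sup>+y. ?kl z (x - y) \<partial>M \<partial>lborel)" for z
  proof (rule nn_integral_mono_AE)
    have "AE x in lborel. (\<integral>\<^sup>+y. ennreal (p (x - z - y)) \<partial>M) = ennreal (conv_density M p (x - z))"
      using AE_borel_affine[of 1 _ "- z", OF _ _ AE_nn_integral_conv_density[OF M sets_M p]] by simp
    then show "AE x in lborel. kl_integrand (conv_density M p (x - z)) (conv_density M g x)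
        \<le> (\<integral>\<^sup>+y. ?kl z (x - y) \<partial>M)"
      using AE_nn_integral_conv_density[OF M sets_M g]
    proof eventually_elim
      case (elim x)
      have "kl_integrand (conv_density M p (x - z)) (conv_density M g x)
          \<le> (\<integral>\<^sup>+y. kl_integrand (p (x - z - y)) (g (x - y)) \<partial>M)"
        using M.kl_integrand_expectation_le[of "\<lambda>y. p (x - z - y)" "\<lambda>y. g (x - y)"]
          conv_density_eq_integral[OF M sets_M p elim(1)] conv_density_eq_integral[OF M sets_M g elim(2)]
          prob_density_nonneg[OF p] prob_density_nonneg[OF g]
        by simp
      then show ?case by (simp add: algebra_simps)
    qed
  qed
  have "translate_divergence T (conv_density M p) (conv_density M g)
      = (\<integral>\<^sup>+z. \<integral>\<^sup>+x. kl_integrand (conv_density M p (x - z)) (conv_density M g x) \<partial>lborel \<partial>T)"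
    unfolding translate_divergence_def
    by (rule nn_integral_lborel_swap[OF T sets_T, of "\<lambda>(x, z). kl_integrand (conv_density M p (x - z)) (conv_density M g x)", simplified]) measurable
  also have "\<dots> \<le> (\<integral>\<^sup>+z. \<integral>\<^sup>+x. \<integral>\<^sup>+y. ?kl z (x - y) \<partial>M \<partial>lborel \<partial>T)"
    by (intro nn_integral_mono pointwise)
  also have "\<dots> = (\<integral>\<^sup>+z. \<integral>\<^sup>+x. ?kl z x \<partial>lborel \<partial>T)"
    by (intro nn_integral_cong nn_integral_conv[OF M sets_M]) measurable
  also have "\<dots> = translate_divergence T p g"
    unfolding translate_divergence_def
    by (rule nn_integral_lborel_swap[OF T sets_T, of "\<lambda>(x, z). ?kl z x", simplified, symmetric]) measurable
  finally show ?thesis .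
qed

section \<open>Probability measures of finite entropy\<close>

definition log_moment_prob :: "real measure \<Rightarrow> bool" where
  "log_moment_prob M \<longleftrightarrow> prob_space M \<and> sets M = sets borel \<and> log_moment M < \<infinity>"

lemma log_moment_probD:
  assumes "log_moment_prob M"
  shows "prob_space M" "finite_measure M" "sets M = sets borel" "log_moment M < \<infinity>"
  using assms by (auto simp: log_moment_prob_def prob_space_def)

text \<open>The logarithmic moment bounds the negative part of \<open>p ln p\<close> (lemma \<open>integrable_xlnx\<close>),
  which keeps the class closed under convolution.\<close>
definition finite_entropy_prob :: "real measure \<Rightarrow> bool" where
  "finite_entropy_prob P \<longleftrightarrow> log_moment_prob P \<and>
     (\<exists>p. prob_density p \<and> P = density lborel (\<lambda>x. ennreal (p x))
        \<and> integrable lborel (\<lambda>x. p x * ln (p x)))"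

text \<open>Only meaningful where \<open>ent\<close> is finite: \<open>real_of_ereal\<close> sends \<open>\<plusminus>\<infinity>\<close> to \<open>0\<close>.\<close>
definition ent_real :: "real measure \<Rightarrow> real" where
  "ent_real P = real_of_ereal (ent P)"

lemma finite_entropy_probI:
  assumes "prob_density p" "integrable lborel (\<lambda>x. p x * ln (p x))"
    and "log_moment (density lborel (\<lambda>x. ennreal (p x))) < \<infinity>"
  shows "finite_entropy_prob (density lborel (\<lambda>x. ennreal (p x)))"
  using assms prob_space_prob_density[OF assms(1)]
  unfolding finite_entropy_prob_def log_moment_prob_def by auto

lemma finite_entropy_probE:
  assumes "finite_entropy_prob P"
  obtains p where "prob_density p" "P = density lborel (\<lambda>x. ennreal (p x))"
    "integrable lborel (\<lambda>x. p x * ln (p x))" "log_moment P < \<infinity>"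
  using assms unfolding finite_entropy_prob_def log_moment_prob_def by auto

lemma finite_entropy_prob_imp_log_moment_prob: "finite_entropy_prob P \<Longrightarrow> log_moment_prob P"
  by (simp add: finite_entropy_prob_def)

lemma ent_real_density:
  assumes "prob_density p" "integrable lborel (\<lambda>x. p x * ln (p x))"
  shows "ent (density lborel (\<lambda>x. ennreal (p x))) = ereal (ent_real (density lborel (\<lambda>x. ennreal (p x))))"
    and "ent_real (density lborel (\<lambda>x. ennreal (p x))) = (\<integral>x. p x * ln (p x) \<partial>lborel)"
proof -
  have "ent (density lborel (\<lambda>x. ennreal (p x))) = ereal (\<integral>x. p x * ln (p x) \<partial>lborel)"
    using assms by (intro ent_density_eq_integral) (auto simp: prob_densityD)
  then show "ent (density lborel (\<lambda>x. ennreal (p x))) = ereal (ent_real (density lborel (\<lambda>x. ennreal (p x))))"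
    and "ent_real (density lborel (\<lambda>x. ennreal (p x))) = (\<integral>x. p x * ln (p x) \<partial>lborel)"
    by (simp_all add: ent_real_def)
qed

lemma ent_eq_ent_real: "finite_entropy_prob P \<Longrightarrow> ent P = ereal (ent_real P)"
  by (metis finite_entropy_probE ent_real_density(1))

lemma finite_entropy_prob_density_integrable:
  assumes "finite_entropy_prob (density lborel (\<lambda>x. ennreal (p x)))" and p: "prob_density p"
  shows "integrable lborel (\<lambda>x. p x * ln (p x))"
proof -
  obtain q where q: "prob_density q" "integrable lborel (\<lambda>x. q x * ln (q x))"
    and eq: "density lborel (\<lambda>x. ennreal (q x)) = density lborel (\<lambda>x. ennreal (p x))"
    using finite_entropy_probE[OF assms(1)] by metis
  from prob_density_AE_unique[OF q(1) p eq]
  have "AE x in lborel. q x * ln (q x) = p x * ln (p x)"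
    by eventually_elim simp
  moreover have [measurable]: "p \<in> borel_measurable borel"
    using p by (rule prob_density_measurable)
  ultimately show ?thesis
    by (intro integrable_cong_AE_imp[OF q(2)]) auto
qed

lemma finite_entropy_prob_convolution:
  assumes M: "log_moment_prob M" and P: "finite_entropy_prob P"
  shows "finite_entropy_prob (M \<star> P)"
proof -
  obtain p where p: "prob_density p" "P = density lborel (\<lambda>x. ennreal (p x))"
    "integrable lborel (\<lambda>x. p x * ln (p x))" "log_moment P < \<infinity>"
    using finite_entropy_probE[OF P] by metis
  have M': "prob_space M" "sets M = sets borel" "log_moment M < \<infinity>"
    using M by (auto simp: log_moment_prob_def)
  have conv: "M \<star> P = density lborel (\<lambda>x. ennreal (conv_density M p x))"
    unfolding p(2) by (rule convolution_density_eq_conv_density[OF M'(1,2) p(1)])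
  have "log_moment (M \<star> P) \<le> log_moment M + log_moment P"
    using M'(1,2) P by (intro log_moment_convolution_le) (auto simp: finite_entropy_prob_def log_moment_prob_def)
  also have "\<dots> < \<infinity>"
    using M'(3) p(4) by simp
  finally show ?thesis
    unfolding conv using p M'
    by (intro finite_entropy_probI prob_density_conv_density integrable_xlnx_conv_density) simp_all
qed

lemma
  assumes P: "finite_entropy_prob P" and "0 < t" "t \<le> 1"
  shows finite_entropy_prob_dil: "finite_entropy_prob (dil t P)"
    and ent_real_dil: "ent_real (dil t P) = ent_real P - ln t"
proof -
  obtain p where p: "prob_density p" "P = density lborel (\<lambda>x. ennreal (p x))"
    "integrable lborel (\<lambda>x. p x * ln (p x))" "log_moment P < \<infinity>"
    using finite_entropy_probE[OF P] by metis
  have dil: "dil t P = density lborel (\<lambda>x. ennreal (dilate_density t p x))"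
    unfolding p(2) using \<open>0 < t\<close> p(1) by (intro dil_density prob_densityD)
  have "log_moment (dil t P) \<le> log_moment P"
    using \<open>0 < t\<close> \<open>t \<le> 1\<close> p(2) by (intro log_moment_dil_le) simp_all
  with p(4) have "log_moment (dil t P) < \<infinity>" by (simp add: le_less_trans)
  then show "finite_entropy_prob (dil t P)"
    unfolding dil using \<open>0 < t\<close> p(1,3)
    by (intro finite_entropy_probI prob_density_dilate_density integrable_xlnx_dilate_density) auto
  have "ent_real (dil t P) = (\<integral>x. dilate_density t p x * ln (dilate_density t p x) \<partial>lborel)"
    unfolding dil using \<open>0 < t\<close> p(1,3)
    by (intro ent_real_density prob_density_dilate_density integrable_xlnx_dilate_density)
  also have "\<dots> = ent_real P - ln t"
    using \<open>0 < t\<close> p(1,3) by (simp add: integral_xlnx_dilate_density p(2) ent_real_density)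
  finally show "ent_real (dil t P) = ent_real P - ln t" .
qed

text \<open>With \<open>g = T \<star> p\<close>, both entropy gains are divergences averaged over the translates by \<open>T\<close>,
  which decrease under the common smoothing by \<open>M\<close>.\<close>
lemma ent_real_gain_convolution:
  assumes M: "log_moment_prob M" and T: "log_moment_prob T" and P: "finite_entropy_prob P"
  shows "ent_real (M \<star> (T \<star> P)) \<le> ent_real (M \<star> P)"
    and "ent_real (M \<star> P) - ent_real (M \<star> (T \<star> P)) \<le> ent_real P - ent_real (T \<star> P)"
proof -
  note M' = log_moment_probD[OF M] and T' = log_moment_probD[OF T]
  note [measurable_cong] = M'(3) T'(3)
  obtain p where p: "prob_density p" "P = density lborel (\<lambda>x. ennreal (p x))"
    "integrable lborel (\<lambda>x. p x * ln (p x))"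
    using finite_entropy_probE[OF P] by metis
  define g F G where "g = conv_density T p" and "F = conv_density M p" and "G = conv_density M g"
  have "prob_density g" "prob_density F"
    unfolding g_def F_def using M'(1,3) T'(1,3) p(1) by (simp_all add: prob_density_conv_density)
  then have dens: "prob_density g" "prob_density F" "prob_density G"
    unfolding G_def using M'(1,3) by (simp_all add: prob_density_conv_density)
  have conv: "(T \<star> P) = density lborel (\<lambda>x. ennreal (g x))"
    "(M \<star> P) = density lborel (\<lambda>x. ennreal (F x))"
    "(M \<star> density lborel (\<lambda>x. ennreal (g x))) = density lborel (\<lambda>x. ennreal (G x))"
    unfolding g_def F_def G_def p(2) using M'(1,3) T'(1,3) p(1) dens(1)
    by (simp_all add: convolution_density_eq_conv_density g_def)
  have fin: "finite_entropy_prob (T \<star> P)" "finite_entropy_prob (M \<star> P)" "finite_entropy_prob (M \<star> (T \<star> P))"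
    using M T P by (simp_all add: finite_entropy_prob_convolution)
  have int: "integrable lborel (\<lambda>x. g x * ln (g x))" "integrable lborel (\<lambda>x. F x * ln (F x))"
    "integrable lborel (\<lambda>x. G x * ln (G x))"
    using fin dens unfolding conv by (simp_all add: finite_entropy_prob_density_integrable)
  have mean_G: "AE x in lborel. (\<integral>\<^sup>+z. ennreal (F (x - z)) \<partial>T) = ennreal (G x)"
    using AE_conv_density_left_commute[OF M'(1,3) T'(1,3) p(1)]
      AE_nn_integral_conv_density[OF T'(1,3) dens(2)]
    by eventually_elim (simp add: F_def G_def g_def)
  have mean_g: "AE x in lborel. (\<integral>\<^sup>+z. ennreal (p (x - z)) \<partial>T) = ennreal (g x)"
    unfolding g_def by (rule AE_nn_integral_conv_density[OF T'(1,3) p(1)])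
  note gain_p = translate_divergence_eq_entropy_gain[OF T'(1,3) p(1) dens(1) mean_g p(3) int(1)]
  note gain_F = translate_divergence_eq_entropy_gain[OF T'(1,3) dens(2) dens(3) mean_G int(2,3)]
  have "translate_divergence T F G \<le> translate_divergence T p g"
    unfolding F_def G_def using M'(1,3) T'(1,3) p(1) dens(1)
    by (rule translate_divergence_conv_density_le)
  then have "(\<integral>x. F x * ln (F x) \<partial>lborel) - (\<integral>x. G x * ln (G x) \<partial>lborel)
      \<le> (\<integral>x. p x * ln (p x) \<partial>lborel) - (\<integral>x. g x * ln (g x) \<partial>lborel)"
    using gain_p gain_F by simp
  moreover have "ent_real (T \<star> P) = (\<integral>x. g x * ln (g x) \<partial>lborel)"
    "ent_real (M \<star> P) = (\<integral>x. F x * ln (F x) \<partial>lborel)"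
    "ent_real (M \<star> (T \<star> P)) = (\<integral>x. G x * ln (G x) \<partial>lborel)"
    "ent_real P = (\<integral>x. p x * ln (p x) \<partial>lborel)"
    unfolding conv using dens int by (simp_all add: p ent_real_density)
  ultimately show "ent_real (M \<star> P) - ent_real (M \<star> (T \<star> P)) \<le> ent_real P - ent_real (T \<star> P)"
    and "ent_real (M \<star> (T \<star> P)) \<le> ent_real (M \<star> P)"
    using gain_F(2) by simp_all
qed

lemma finite_entropy_prob_unit_interval:
  "finite_entropy_prob (density lborel (indicator {0..1::real}))"
proof -
  let ?chi = "indicator {0..1::real} :: real \<Rightarrow> real"
  have "(\<lambda>x. ?chi x * ln (?chi x)) = (\<lambda>_. 0)"
    by (auto simp: indicator_def)
  moreover have "log_moment (density lborel (\<lambda>x. ennreal (?chi x))) \<le> 1"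
  proof -
    have "log_moment (density lborel (\<lambda>x. ennreal (?chi x)))
        = (\<integral>\<^sup>+x. ennreal (?chi x * ln (1 + \<bar>x\<bar>)) \<partial>lborel)"
      by (rule log_moment_density) auto
    also have "\<dots> \<le> (\<integral>\<^sup>+x. ennreal (?chi x) \<partial>lborel)"
      by (intro nn_integral_mono ennreal_leI)
        (auto simp: indicator_def intro: order_trans[OF ln_add_one_self_le_self])
    finally show ?thesis by (simp add: ennreal_indicator)
  qed
  ultimately have "finite_entropy_prob (density lborel (\<lambda>x. ennreal (?chi x)))"
    by (intro finite_entropy_probI) (auto simp: prob_density_def ennreal_indicator le_less_trans)
  then show ?thesis
    by (simp add: ennreal_indicator)
qed

text \<open>The two entropies are compared through the common refinement \<open>M \<star> dil t (P \<star> R)\<close>: the gain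
  in passing to it from either side is at most a gain that the dilation does not change.\<close>
lemma ent_real_convolution_dil_diff_le:
  assumes M: "log_moment_prob M" and P: "finite_entropy_prob P" and R: "finite_entropy_prob R"
    and "0 < t" "t \<le> 1"
  shows "\<bar>ent_real (M \<star> dil t P) - ent_real (M \<star> dil t R)\<bar>
       \<le> (ent_real P - ent_real (P \<star> R)) + (ent_real R - ent_real (P \<star> R))"
proof -
  have Pt: "finite_entropy_prob (dil t P)" and Rt: "finite_entropy_prob (dil t R)"
    using P R \<open>0 < t\<close> \<open>t \<le> 1\<close> by (auto intro: finite_entropy_prob_dil)
  have PR: "finite_entropy_prob (P \<star> R)"
    using P R by (intro finite_entropy_prob_convolution finite_entropy_prob_imp_log_moment_prob)
  have "dil t (P \<star> R) = (dil t P \<star> dil t R)"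
    using P R by (intro dil_convolution log_moment_probD finite_entropy_prob_imp_log_moment_prob)
  moreover have "(dil t P \<star> dil t R) = (dil t R \<star> dil t P)"
    using Pt Rt by (intro convolution_commutative log_moment_probD finite_entropy_prob_imp_log_moment_prob)
  ultimately have S: "(dil t P \<star> dil t R) = dil t (P \<star> R)" "(dil t R \<star> dil t P) = dil t (P \<star> R)"
    by simp_all
  note gain_P = ent_real_gain_convolution[OF M finite_entropy_prob_imp_log_moment_prob[OF Rt] Pt]
  note gain_R = ent_real_gain_convolution[OF M finite_entropy_prob_imp_log_moment_prob[OF Pt] Rt]
  show ?thesis
    using gain_P gain_R unfolding S
    using ent_real_dil[OF P] ent_real_dil[OF R] ent_real_dil[OF PR] \<open>0 < t\<close> \<open>t \<le> 1\<close>
    by (simp add: abs_le_iff)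
qed

lemma Liminf_eq_if_close:
  fixes A B :: "'a \<Rightarrow> ereal"
  assumes "F \<noteq> bot"
    and close: "\<And>e. 0 < e \<Longrightarrow> \<forall>\<^sub>F t in F. A t \<le> B t + ereal e \<and> B t \<le> A t + ereal e"
  shows "Liminf F A = Liminf F B"
proof -
  have "Liminf F A \<le> Liminf F B"
    if "\<And>e. 0 < e \<Longrightarrow> \<forall>\<^sub>F t in F. A t \<le> B t + ereal e" for A B :: "'a \<Rightarrow> ereal"
  proof (rule ereal_le_epsilon2)
    fix e :: real assume "0 < e"
    have "Liminf F A \<le> Liminf F (\<lambda>t. B t + ereal e)"
      using that[OF \<open>0 < e\<close>] by (rule Liminf_mono)
    also have "\<dots> = Liminf F B + ereal e"
      using \<open>F \<noteq> bot\<close> by (simp add: Liminf_add_ereal_right)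
    finally show "Liminf F A \<le> Liminf F B + ereal e" .
  qed
  with close show ?thesis
    by (metis (mono_tags, lifting) antisym eventually_mono)
qed

lemma Liminf_divide_eq_if_bounded_diff:
  fixes a b w :: "'a \<Rightarrow> real"
  assumes "F \<noteq> bot" and w: "filterlim w at_top F"
    and bounded: "\<forall>\<^sub>F t in F. A t = ereal (a t) \<and> B t = ereal (b t) \<and> \<bar>a t - b t\<bar> \<le> K"
  shows "Liminf F (\<lambda>t. A t / ereal (w t)) = Liminf F (\<lambda>t. B t / ereal (w t))"
proof (rule Liminf_eq_if_close[OF \<open>F \<noteq> bot\<close>])
  fix e :: real assume "0 < e"
  have "\<forall>\<^sub>F t in F. K / e + 1 < w t"
    using w by (simp add: filterlim_at_top_dense)
  with bounded show "\<forall>\<^sub>F t in F. A t / ereal (w t) \<le> B t / ereal (w t) + ereal e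
      \<and> B t / ereal (w t) \<le> A t / ereal (w t) + ereal e"
  proof eventually_elim
    case (elim t)
    have "0 \<le> K"
      using elim abs_ge_zero[of "a t - b t"] by linarith
    then have "0 \<le> K / e"
      using \<open>0 < e\<close> by simp
    with elim have "0 < w t" "K / e < w t"
      by linarith+
    with elim \<open>0 < e\<close> have "\<bar>a t - b t\<bar> < e * w t"
      by (simp add: pos_divide_less_eq mult.commute)
    then have "\<bar>a t / w t - b t / w t\<bar> < e"
      using \<open>0 < w t\<close> by (simp add: diff_divide_distrib[symmetric] pos_divide_less_eq mult.commute)
    then show ?case
      using elim \<open>0 < w t\<close> by (simp add: abs_less_iff)
  qed
qed

lemma filterlim_abs_ln_at_right_0: "filterlim (\<lambda>t. \<bar>ln t\<bar>) at_top (at_right (0::real))"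
proof (rule filterlim_at_top_mono)
  show "filterlim (\<lambda>t. - ln t) at_top (at_right (0::real))"
    by (simp add: filterlim_uminus_at_top ln_at_0)
qed (intro always_eventually allI abs_ge_minus_self)

theorem theorem2p7:
  fixes \<mu> \<nu> :: "real measure" and q :: "real \<Rightarrow> real"
  assumes "prob_space \<nu>" and "prob_space \<mu>"
    and "sets \<mu> = sets borel"
    and "q \<in> borel_measurable borel" and "\<And>x. 0 \<le> q x"
    and "\<nu> = density lborel (\<lambda>x. ennreal (q x))"
    and "integrable lborel (\<lambda>x. q x * ln (q x))"
    and "integrable \<nu> (\<lambda>x. ln (1 + \<bar>x\<bar>))"
    and "integrable \<mu> (\<lambda>x. ln (1 + \<bar>x\<bar>))"
  shows "Liminf (at_right 0) (\<lambda>t. ent (\<mu> \<star> dil t \<nu>) / ereal \<bar>ln t\<bar>)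
       = Liminf (at_right 0)
           (\<lambda>t. ent (\<mu> \<star> dil t (density lborel (indicator {0..1::real})))
                 / ereal \<bar>ln t\<bar>)"
proof -
  let ?\<chi> = "density lborel (indicator {0..1::real})"
  have \<mu>: "log_moment_prob \<mu>"
    using assms(2,3) log_moment_less_top[OF assms(9)] by (simp add: log_moment_prob_def)
  have "prob_density q"
    using assms(4,5) prob_space.emeasure_space_1[OF assms(1)]
    by (simp add: prob_density_def assms(6) emeasure_density)
  then have \<nu>: "finite_entropy_prob \<nu>"
    unfolding assms(6) using assms(7) log_moment_less_top[OF assms(8)] assms(6)
    by (intro finite_entropy_probI) simp_all
  note \<chi> = finite_entropy_prob_unit_interval
  define K where "K = (ent_real \<nu> - ent_real (\<nu> \<star> ?\<chi>)) + (ent_real ?\<chi> - ent_real (\<nu> \<star> ?\<chi>))"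
  have "ent (\<mu> \<star> dil t \<nu>) = ereal (ent_real (\<mu> \<star> dil t \<nu>))
      \<and> ent (\<mu> \<star> dil t ?\<chi>) = ereal (ent_real (\<mu> \<star> dil t ?\<chi>))
      \<and> \<bar>ent_real (\<mu> \<star> dil t \<nu>) - ent_real (\<mu> \<star> dil t ?\<chi>)\<bar> \<le> K" if "t \<in> {0<..<1}" for t
    using that ent_real_convolution_dil_diff_le[OF \<mu> \<nu> \<chi>, of t] \<mu> \<nu> \<chi>
    by (simp add: K_def ent_eq_ent_real finite_entropy_prob_convolution finite_entropy_prob_dil)
  then show ?thesis
    by (intro Liminf_divide_eq_if_bounded_diff filterlim_abs_ln_at_right_0 eventually_at_rightI[of 0 1])
      auto
qed

end
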